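(* Under the standing assumptions, $G$ does not contain a vertex $v$ of degree $8$ together with pairwise distinct neighbours $x,y,z,t,r$ of $v$ and a vertex $p\notin\{v,x,y,z,t,r\}$ such that $d(x)=2$, $d(z)=d(t)=3$, $yz,tr\in E(G)$, and $p$ is adjacent to both $z$ and $t$.
   Context: Standing assumptions: A total $9$-coloring of a graph is an assignment of colors from $\{1,\dots,9\}$ to the vertices and edges such that adjacent vertices, edges sharing an endpoint, and a vertex and an incident edge receive different colors. A $4$-fan is the graph on six vertices $c,u_1,\dots,u_5$ with edges $cu_j$ ($1\le j\le5$) and $u_ju_{j+1}$ ($1\le j\le4$). $G$ is a minimal counterexample: $G$ is a simple planar graph with maximum degree $8$, containing no subgraph isomorphic to a $4$-fan, that has no total $9$-coloring, and such that every simple planar graph $H$ with maximum degree at most $8$, no subgraph isomorphic to a $4$-fan, and $|V(H)|+|E(H)|<|V(G)|+|E(G)|$ has a total $9$-coloring. $d(\cdot)$ denotes degree in $G$. *)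

theory Defs
  imports "HOL-Analysis.Analysis"
begin

definition simple_graph :: "'a set \<Rightarrow> 'a set set \<Rightarrow> bool" where
  "simple_graph V E \<longleftrightarrow> finite V \<and>
     (\<forall>e\<in>E. \<exists>u v. e = {u, v} \<and> u \<noteq> v \<and> u \<in> V \<and> v \<in> V)"

definition adj :: "'a set set \<Rightarrow> 'a \<Rightarrow> 'a \<Rightarrow> bool" where
  "adj E u v \<longleftrightarrow> u \<noteq> v \<and> {u, v} \<in> E"

definition degree :: "'a set \<Rightarrow> 'a set set \<Rightarrow> 'a \<Rightarrow> nat" where
  "degree V E v = card {u \<in> V. adj E v u}"

definition max_degree_le :: "'a set \<Rightarrow> 'a set set \<Rightarrow> nat \<Rightarrow> bool" where
  "max_degree_le V E k \<longleftrightarrow> (\<forall>v\<in>V. degree V E v \<le> k)"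

definition max_degree_eq :: "'a set \<Rightarrow> 'a set set \<Rightarrow> nat \<Rightarrow> bool" where
  "max_degree_eq V E k \<longleftrightarrow> max_degree_le V E k \<and> (\<exists>v\<in>V. degree V E v = k)"

definition planar :: "'a set \<Rightarrow> 'a set set \<Rightarrow> bool" where
  "planar V E \<longleftrightarrow> (\<exists>(pos :: 'a \<Rightarrow> complex) (\<gamma> :: 'a set \<Rightarrow> real \<Rightarrow> complex).
     inj_on pos V \<and>
     (\<forall>e\<in>E. arc (\<gamma> e) \<and> {pathstart (\<gamma> e), pathfinish (\<gamma> e)} = pos ` e \<and>
              path_image (\<gamma> e) \<inter> pos ` V = pos ` e) \<and>
     (\<forall>e\<in>E. \<forall>e'\<in>E. e \<noteq> e' \<longrightarrow>
              path_image (\<gamma> e) \<inter> path_image (\<gamma> e') = pos ` (e \<inter> e')))"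

definition has_4fan :: "'a set \<Rightarrow> 'a set set \<Rightarrow> bool" where
  "has_4fan V E \<longleftrightarrow> (\<exists>c u1 u2 u3 u4 u5.
     distinct [c, u1, u2, u3, u4, u5] \<and> set [c, u1, u2, u3, u4, u5] \<subseteq> V \<and>
     adj E c u1 \<and> adj E c u2 \<and> adj E c u3 \<and> adj E c u4 \<and> adj E c u5 \<and>
     adj E u1 u2 \<and> adj E u2 u3 \<and> adj E u3 u4 \<and> adj E u4 u5)"

definition total_coloring :: "'a set \<Rightarrow> 'a set set \<Rightarrow> nat \<Rightarrow> ('a \<Rightarrow> nat) \<Rightarrow> ('a set \<Rightarrow> nat) \<Rightarrow> bool" where
  "total_coloring V E k cv ce \<longleftrightarrow>
     (\<forall>v\<in>V. cv v \<in> {1..k}) \<and> (\<forall>e\<in>E. ce e \<in> {1..k}) \<and>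
     (\<forall>u\<in>V. \<forall>v\<in>V. adj E u v \<longrightarrow> cv u \<noteq> cv v) \<and>
     (\<forall>e\<in>E. \<forall>e'\<in>E. e \<noteq> e' \<and> e \<inter> e' \<noteq> {} \<longrightarrow> ce e \<noteq> ce e') \<and>
     (\<forall>e\<in>E. \<forall>v\<in>e. cv v \<noteq> ce e)"

definition total_colorable :: "'a set \<Rightarrow> 'a set set \<Rightarrow> nat \<Rightarrow> bool" where
  "total_colorable V E k \<longleftrightarrow> (\<exists>cv ce. total_coloring V E k cv ce)"

text \<open>Minimal counterexample. Competing graphs H range over finite simple graphs
  with vertices labelled by natural numbers (covering all finite graphs up to isomorphism).\<close>
definition minimal_counterexample :: "'a set \<Rightarrow> 'a set set \<Rightarrow> bool" where
  "minimal_counterexample V E \<longleftrightarrow>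
     simple_graph V E \<and> planar V E \<and> max_degree_eq V E 8 \<and> \<not> has_4fan V E \<and>
     \<not> total_colorable V E 9 \<and>
     (\<forall>(VH :: nat set) EH. simple_graph VH EH \<and> planar VH EH \<and> max_degree_le VH EH 8 \<and>
        \<not> has_4fan VH EH \<and> card VH + card EH < card V + card E \<longrightarrow> total_colorable VH EH 9)"

end

theory Submission
  imports Defs
begin

text \<open>
  Delete the edge \<open>vx\<close>. By minimality (applied to a copy of the graph with vertices relabeled by
  natural numbers) the rest has a total 9-coloring. Since \<open>v\<close> has degree 8 and \<open>vx\<close> is
  uncolored, some color \<open>m\<close> is missing at \<open>v\<close>. Now recolor the nine edges \<open>vx, vy, vz, vt, vr,
  zy, zp, tr, tp\<close>: at \<open>v\<close> they use only the old colors of \<open>vy, vr, vz, vt\<close> and \<open>m\<close>, at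
  each of \<open>y, r, p\<close> the two recolored edges just exchange their old colors, the three edges at
  \<open>z\<close> and at \<open>t\<close> stay distinct, and \<open>vx\<close> avoids the color of the other edge at \<open>x\<close>; a finite
  case analysis shows this is always possible. Finally \<open>x\<close>, \<open>z\<close> and \<open>t\<close> see at most six
  colors each (their neighbors and incident edges) and can be recolored. This yields a total
  9-coloring of \<open>G\<close>, a contradiction.
\<close>

lemma adj_commute: "adj E u w \<longleftrightarrow> adj E w u"
  by (auto simp: adj_def insert_commute)

lemma adj_sym: "adj E u w \<Longrightarrow> adj E w u"
  by (simp add: adj_commute)

lemma not_adj_self: "\<not> adj E q q"
  unfolding adj_def by simp

lemma adj_mono: "adj E' u w \<Longrightarrow> E' \<subseteq> E \<Longrightarrow> adj E u w"
  unfolding adj_def by blast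

lemma adj_delete_edge_iff: "adj (E - {e}) q u \<longleftrightarrow> adj E q u \<and> {q, u} \<noteq> e"
  unfolding adj_def by blast

lemma adj_in_vertices:
  assumes "simple_graph V E" "adj E u w"
  shows "u \<in> V" "w \<in> V"
  using assms unfolding simple_graph_def adj_def by (metis doubleton_eq_iff)+

lemma edge_subset_vertices: "simple_graph V E \<Longrightarrow> e \<in> E \<Longrightarrow> e \<subseteq> V"
  unfolding simple_graph_def by fastforce

lemma finite_edges: "simple_graph V E \<Longrightarrow> finite E"
  by (rule finite_subset[of _ "Pow V"]) (auto dest: edge_subset_vertices simp: simple_graph_def)

lemma edge_at_vertex:
  assumes "simple_graph V E" "e \<in> E" "q \<in> e"
  obtains u where "e = {q, u}" "adj E q u"
proof -
  obtain a b where ab: "e = {a, b}" "a \<noteq> b"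
    using assms(1,2) unfolding simple_graph_def by blast
  then consider "q = a" | "q = b" using assms(3) by blast
  then show ?thesis
    using that[of b] that[of a] ab assms(2) unfolding adj_def by cases (auto simp: insert_commute)
qed

lemma degree_eq_card_neighbors:
  assumes "simple_graph V E"
  shows "degree V E q = card {u. adj E q u}"
proof -
  have "{u \<in> V. adj E q u} = {u. adj E q u}" using assms by (auto intro: adj_in_vertices(2))
  then show ?thesis unfolding degree_def by simp
qed

lemma neighbors_eq_if_card:
  assumes "simple_graph V E" "S \<subseteq> {u. adj E q u}" "finite S" "card S = degree V E q"
  shows "{u. adj E q u} = S"
proof -
  have "finite {u. adj E q u}"
    using assms(1) adj_in_vertices(2)[OF assms(1)] unfolding simple_graph_def
    by (metis (no_types, lifting) mem_Collect_eq rev_finite_subset subsetI)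
  then show ?thesis
    using card_subset_eq assms degree_eq_card_neighbors[OF assms(1)] by metis
qed

lemma neighbors_degree_two:
  assumes "simple_graph V E" "degree V E q = 2" "adj E q a"
  obtains b where "{u. adj E q u} = {a, b}" "b \<noteq> a"
proof -
  obtain c d where "{u. adj E q u} = {c, d}" "c \<noteq> d"
    using assms(1,2) degree_eq_card_neighbors card_2_iff by metis
  with assms(3) that show ?thesis by (metis doubleton_eq_iff insertE mem_Collect_eq singletonD)
qed

lemma simple_graph_mono: "simple_graph V E \<Longrightarrow> E' \<subseteq> E \<Longrightarrow> simple_graph V E'"
  unfolding simple_graph_def by blast

lemma planar_mono:
  assumes "planar V E" "E' \<subseteq> E"
  shows "planar V E'"
proof -
  obtain pos :: "'a \<Rightarrow> complex" and \<gamma> where inj: "inj_on pos V" and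
    arcs: "\<forall>e\<in>E. arc (\<gamma> e) \<and> {pathstart (\<gamma> e), pathfinish (\<gamma> e)} = pos ` e \<and>
       path_image (\<gamma> e) \<inter> pos ` V = pos ` e" and
    crossings: "\<forall>e\<in>E. \<forall>e'\<in>E. e \<noteq> e' \<longrightarrow>
       path_image (\<gamma> e) \<inter> path_image (\<gamma> e') = pos ` (e \<inter> e')"
    using assms(1) unfolding planar_def by (elim exE conjE) blast
  have "\<forall>e\<in>E'. arc (\<gamma> e) \<and> {pathstart (\<gamma> e), pathfinish (\<gamma> e)} = pos ` e \<and>
       path_image (\<gamma> e) \<inter> pos ` V = pos ` e"
    using arcs assms(2) by (simp add: subset_eq)
  moreover have "\<forall>e\<in>E'. \<forall>e'\<in>E'. e \<noteq> e' \<longrightarrow>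
       path_image (\<gamma> e) \<inter> path_image (\<gamma> e') = pos ` (e \<inter> e')"
    using crossings assms(2) by (simp add: subset_eq)
  ultimately show ?thesis
    unfolding planar_def by (intro exI[of _ pos] exI[of _ \<gamma>] conjI inj)
qed

lemma max_degree_le_mono:
  assumes "finite V" "max_degree_le V E k" "E' \<subseteq> E"
  shows "max_degree_le V E' k"
proof -
  have "degree V E' q \<le> degree V E q" for q
    unfolding degree_def using assms(1,3) by (intro card_mono) (auto dest: adj_mono)
  then show ?thesis using assms(2) unfolding max_degree_le_def by (meson le_trans)
qed

lemma has_4fan_mono:
  assumes "has_4fan V E'" "E' \<subseteq> E"
  shows "has_4fan V E"
proof -
  obtain c u1 u2 u3 u4 u5 where fan:
    "distinct [c, u1, u2, u3, u4, u5]" "set [c, u1, u2, u3, u4, u5] \<subseteq> V"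
    "adj E' c u1" "adj E' c u2" "adj E' c u3" "adj E' c u4" "adj E' c u5"
    "adj E' u1 u2" "adj E' u2 u3" "adj E' u3 u4" "adj E' u4 u5"
    using assms(1) unfolding has_4fan_def by (elim exE conjE) blast
  then have "adj E c u1" "adj E c u2" "adj E c u3" "adj E c u4" "adj E c u5"
    "adj E u1 u2" "adj E u2 u3" "adj E u3 u4" "adj E u4 u5"
    using adj_mono[OF _ assms(2)] by blast+
  with fan(1,2) show ?thesis unfolding has_4fan_def by blast
qed

section \<open>Relabeling the vertices\<close>

lemma edges_in_Pow: "simple_graph V E \<Longrightarrow> E \<subseteq> Pow V"
  using edge_subset_vertices by blast

lemma inj_on_image_edges: "simple_graph V E \<Longrightarrow> inj_on f V \<Longrightarrow> inj_on (image f) E"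
  by (rule inj_on_subset[OF inj_on_image_Pow edges_in_Pow])

lemma simple_graph_image:
  assumes "simple_graph V E" "inj_on f V"
  shows "simple_graph (f ` V) (image f ` E)"
  unfolding simple_graph_def
proof (intro conjI ballI)
  show "finite (f ` V)" using assms(1) unfolding simple_graph_def by simp
next
  fix e' assume "e' \<in> image f ` E"
  then obtain u w where "e' = {f u, f w}" "u \<noteq> w" "u \<in> V" "w \<in> V"
    using assms(1) unfolding simple_graph_def by auto
  with assms(2) show "\<exists>u w. e' = {u, w} \<and> u \<noteq> w \<and> u \<in> f ` V \<and> w \<in> f ` V"
    by (metis image_eqI inj_on_contraD)
qed

lemma adj_image_iff:
  assumes "simple_graph V E" "inj_on f V" "u \<in> V" "w \<in> V"
  shows "adj (image f ` E) (f u) (f w) \<longleftrightarrow> adj E u w"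
proof -
  have "f u \<noteq> f w \<longleftrightarrow> u \<noteq> w" using assms(2-4) by (simp add: inj_on_eq_iff)
  moreover have "f ` {u, w} \<in> image f ` E \<longleftrightarrow> {u, w} \<in> E"
    using inj_on_image_Pow[OF assms(2)] edges_in_Pow[OF assms(1)] assms(3,4)
    by (intro inj_on_image_mem_iff) auto
  ultimately show ?thesis unfolding adj_def by simp
qed

lemma degree_image:
  assumes "simple_graph V E" "inj_on f V" "u \<in> V"
  shows "degree (f ` V) (image f ` E) (f u) = degree V E u"
proof -
  have "{w' \<in> f ` V. adj (image f ` E) (f u) w'} = f ` {w \<in> V. adj E u w}"
    using adj_image_iff[OF assms(1,2) assms(3)] by auto
  moreover have "inj_on f {w \<in> V. adj E u w}" using assms(2) by (rule inj_on_subset) auto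
  ultimately show ?thesis unfolding degree_def by (simp add: card_image)
qed

lemma max_degree_le_image:
  "simple_graph V E \<Longrightarrow> inj_on f V \<Longrightarrow> max_degree_le V E k \<Longrightarrow> max_degree_le (f ` V) (image f ` E) k"
  unfolding max_degree_le_def by (simp add: degree_image)

lemma planar_image:
  assumes "simple_graph V E" "inj_on f V" "planar V E"
  shows "planar (f ` V) (image f ` E)"
proof -
  obtain pos :: "'a \<Rightarrow> complex" and \<gamma> where inj: "inj_on pos V" and
    arcs: "\<forall>e\<in>E. arc (\<gamma> e) \<and> {pathstart (\<gamma> e), pathfinish (\<gamma> e)} = pos ` e \<and>
       path_image (\<gamma> e) \<inter> pos ` V = pos ` e" and
    crossings: "\<forall>e\<in>E. \<forall>e'\<in>E. e \<noteq> e' \<longrightarrow>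
       path_image (\<gamma> e) \<inter> path_image (\<gamma> e') = pos ` (e \<inter> e')"
    using assms(3) unfolding planar_def by (elim exE conjE) blast
  define g where "g = inv_into V f"
  have g_image: "g ` f ` S = S" if "S \<subseteq> V" for S
    unfolding g_def using assms(2) that by (rule inv_into_image_cancel)
  define pos' where "pos' = pos \<circ> g"
  define \<gamma>' where "\<gamma>' e' = \<gamma> (g ` e')" for e'
  have pos'_image: "pos' ` f ` S = pos ` S" if "S \<subseteq> V" for S
    unfolding pos'_def image_comp[symmetric] using g_image[OF that] by simp
  have \<gamma>'_image: "\<gamma>' (f ` e) = \<gamma> e" if "e \<in> E" for e
    unfolding \<gamma>'_def using g_image edge_subset_vertices[OF assms(1) that] by simp
  have "inj_on g (f ` V)" unfolding g_def by (rule inj_on_inv_into) simp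
  then have "inj_on pos' (f ` V)"
    unfolding pos'_def using inj g_image[OF subset_refl] by (simp add: comp_inj_on)
  moreover have "\<forall>e'\<in>image f ` E. arc (\<gamma>' e') \<and> {pathstart (\<gamma>' e'), pathfinish (\<gamma>' e')} = pos' ` e' \<and>
       path_image (\<gamma>' e') \<inter> pos' ` f ` V = pos' ` e'"
    using arcs edge_subset_vertices[OF assms(1)] by (auto simp: \<gamma>'_image pos'_image)
  moreover have "\<forall>e1\<in>image f ` E. \<forall>e2\<in>image f ` E. e1 \<noteq> e2 \<longrightarrow>
       path_image (\<gamma>' e1) \<inter> path_image (\<gamma>' e2) = pos' ` (e1 \<inter> e2)"
  proof (intro ballI impI)
    fix e1 e2 assume "e1 \<in> image f ` E" "e2 \<in> image f ` E" "e1 \<noteq> e2"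
    then obtain a1 a2 where a: "a1 \<in> E" "a2 \<in> E" "e1 = f ` a1" "e2 = f ` a2" "a1 \<noteq> a2" by blast
    have sub: "a1 \<subseteq> V" "a2 \<subseteq> V" using edge_subset_vertices[OF assms(1)] a(1,2) by auto
    then have "e1 \<inter> e2 = f ` (a1 \<inter> a2)" using a(3,4) assms(2) by (simp add: inj_on_image_Int)
    with sub have "pos' ` (e1 \<inter> e2) = pos ` (a1 \<inter> a2)" by (simp add: pos'_image le_infI1)
    with crossings a show "path_image (\<gamma>' e1) \<inter> path_image (\<gamma>' e2) = pos' ` (e1 \<inter> e2)"
      by (simp add: \<gamma>'_image)
  qed
  ultimately show ?thesis
    unfolding planar_def by (intro exI[of _ pos'] exI[of _ \<gamma>'] conjI)
qed

lemma has_4fan_imageD: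
  assumes "simple_graph V E" "inj_on f V" "has_4fan (f ` V) (image f ` E)"
  shows "has_4fan V E"
proof -
  define g where "g = inv_into V f"
  have g: "g a \<in> V" "f (g a) = a" if "a \<in> f ` V" for a
    unfolding g_def using that by (auto simp: inv_into_into f_inv_into_f)
  have adj_g: "adj E (g a) (g b)" if "a \<in> f ` V" "b \<in> f ` V" "adj (image f ` E) a b" for a b
    using adj_image_iff[OF assms(1,2) g(1)[OF that(1)] g(1)[OF that(2)]] g that by simp
  have inj_g: "inj_on g (f ` V)" unfolding g_def by (rule inj_on_inv_into) simp
  obtain c u1 u2 u3 u4 u5 where fan:
    "distinct [c, u1, u2, u3, u4, u5]" "set [c, u1, u2, u3, u4, u5] \<subseteq> f ` V"
    "adj (image f ` E) c u1" "adj (image f ` E) c u2" "adj (image f ` E) c u3"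
    "adj (image f ` E) c u4" "adj (image f ` E) c u5" "adj (image f ` E) u1 u2"
    "adj (image f ` E) u2 u3" "adj (image f ` E) u3 u4" "adj (image f ` E) u4 u5"
    using assms(3) unfolding has_4fan_def by (elim exE conjE) blast
  then have "distinct [g c, g u1, g u2, g u3, g u4, g u5]" "set [g c, g u1, g u2, g u3, g u4, g u5] \<subseteq> V"
    using inj_g g(1) by (auto simp: inj_on_eq_iff)
  moreover have "adj E (g c) (g u1)" "adj E (g c) (g u2)" "adj E (g c) (g u3)" "adj E (g c) (g u4)"
    "adj E (g c) (g u5)" "adj E (g u1) (g u2)" "adj E (g u2) (g u3)" "adj E (g u3) (g u4)"
    "adj E (g u4) (g u5)"
    using fan adj_g by simp_all
  ultimately show ?thesis unfolding has_4fan_def by blast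
qed

lemma total_colorable_imageD:
  assumes "simple_graph V E" "inj_on f V" "total_colorable (f ` V) (image f ` E) k"
  shows "total_colorable V E k"
proof -
  obtain cv ce where col: "total_coloring (f ` V) (image f ` E) k cv ce"
    using assms(3) unfolding total_colorable_def by blast
  have "total_coloring V E k (cv \<circ> f) (ce \<circ> image f)"
    unfolding total_coloring_def
  proof (intro conjI ballI impI)
    fix e e' assume "e \<in> E" "e' \<in> E" "e \<noteq> e' \<and> e \<inter> e' \<noteq> {}"
    moreover from this have "f ` e \<noteq> f ` e'" "f ` e \<inter> f ` e' \<noteq> {}"
      using inj_on_image_edges[OF assms(1,2)] by (auto simp: inj_on_eq_iff)
    ultimately show "(ce \<circ> image f) e \<noteq> (ce \<circ> image f) e'"
      using col unfolding total_coloring_def by simp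
  qed (use col adj_image_iff[OF assms(1,2)] in \<open>auto simp: total_coloring_def\<close>)
  then show ?thesis unfolding total_colorable_def by blast
qed

lemma minimal_counterexample_delete_edge:
  assumes "minimal_counterexample V E" "e \<in> E"
  shows "total_colorable V (E - {e}) 9"
proof -
  have simple: "simple_graph V E" and "planar V E" "max_degree_le V E 8" "\<not> has_4fan V E"
    and minimal: "\<forall>(VH :: nat set) EH. simple_graph VH EH \<and> planar VH EH \<and> max_degree_le VH EH 8 \<and>
        \<not> has_4fan VH EH \<and> card VH + card EH < card V + card E \<longrightarrow> total_colorable VH EH 9"
    using assms(1) unfolding minimal_counterexample_def max_degree_eq_def by argo+
  have "finite V" using simple unfolding simple_graph_def by simp
  then obtain f :: "'a \<Rightarrow> nat" where f: "inj_on f V"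
    using finite_imp_inj_to_nat_seg by blast
  have sub: "E - {e} \<subseteq> E" by blast
  have simple': "simple_graph V (E - {e})" using simple sub by (rule simple_graph_mono)
  have "planar V (E - {e})" using \<open>planar V E\<close> sub by (rule planar_mono)
  moreover have "max_degree_le V (E - {e}) 8"
    using \<open>finite V\<close> \<open>max_degree_le V E 8\<close> sub by (rule max_degree_le_mono)
  moreover have "\<not> has_4fan V (E - {e})" using \<open>\<not> has_4fan V E\<close> has_4fan_mono sub by blast
  moreover have "card (image f ` (E - {e})) = card (E - {e})"
    by (rule card_image[OF inj_on_image_edges[OF simple' f]])
  moreover have "card (E - {e}) < card E" using finite_edges[OF simple] assms(2) by (rule card_Diff1_less)
  ultimately have "total_colorable (f ` V) (image f ` (E - {e})) 9"
    using minimal[rule_format, of "f ` V" "image f ` (E - {e})"] simple_graph_image[OF simple' f]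
      planar_image[OF simple' f] max_degree_le_image[OF simple' f] has_4fan_imageD[OF simple' f]
      card_image[OF f] by auto
  then show ?thesis by (rule total_colorable_imageD[OF simple' f])
qed

section \<open>Total colorings as rainbow stars\<close>

lemma total_coloringD:
  assumes "total_coloring V E k cv ce"
  shows "q \<in> V \<Longrightarrow> cv q \<in> {1..k}" "e \<in> E \<Longrightarrow> ce e \<in> {1..k}"
    "q \<in> V \<Longrightarrow> u \<in> V \<Longrightarrow> adj E q u \<Longrightarrow> cv q \<noteq> cv u"
    "e \<in> E \<Longrightarrow> e' \<in> E \<Longrightarrow> e \<noteq> e' \<Longrightarrow> e \<inter> e' \<noteq> {} \<Longrightarrow> ce e \<noteq> ce e'"
    "e \<in> E \<Longrightarrow> q \<in> e \<Longrightarrow> cv q \<noteq> ce e"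
  using assms unfolding total_coloring_def by simp_all

lemma total_coloring_edges_at_vertex:
  assumes "total_coloring V E k cv ce" "adj E q a" "adj E q b" "a \<noteq> b"
  shows "ce {q, a} \<noteq> ce {q, b}"
proof -
  have "{q, a} \<in> E" "{q, b} \<in> E" using assms(2,3) unfolding adj_def by simp_all
  moreover have "{q, a} \<noteq> {q, b}" using assms(4) by (simp add: doubleton_eq_iff)
  ultimately show ?thesis using total_coloringD(4)[OF assms(1)] by simp
qed

definition star :: "'a set set \<Rightarrow> 'a \<Rightarrow> 'a set" where
  "star E q = insert q {u. adj E q u}"

definition star_coloring :: "('a \<Rightarrow> nat) \<Rightarrow> ('a set \<Rightarrow> nat) \<Rightarrow> 'a \<Rightarrow> 'a \<Rightarrow> nat" where
  "star_coloring cv ce q u = (if u = q then cv q else ce {q, u})"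

lemma total_coloring_iff_stars:
  assumes "simple_graph V E"
  shows "total_coloring V E k cv ce \<longleftrightarrow>
    (\<forall>q\<in>V. cv q \<in> {1..k} \<and> (\<forall>u. adj E q u \<longrightarrow> ce {q, u} \<in> {1..k} \<and> cv q \<noteq> cv u) \<and>
      inj_on (star_coloring cv ce q) (star E q))"
proof
  assume col: "total_coloring V E k cv ce"
  have "inj_on (star_coloring cv ce q) (star E q)" for q
  proof (rule inj_onI)
    fix a b assume "a \<in> star E q" "b \<in> star E q" "star_coloring cv ce q a = star_coloring cv ce q b"
    moreover have "ce {q, a} \<noteq> cv q" if "adj E q a" for a
      using total_coloringD(5)[OF col, of "{q, a}" q] that unfolding adj_def by simp
    ultimately show "a = b"
      using total_coloring_edges_at_vertex[OF col]
      unfolding star_def star_coloring_def by (auto split: if_splits)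
  qed
  moreover have "ce {q, u} \<in> {1..k}" if "adj E q u" for q u
    using total_coloringD(2)[OF col] that unfolding adj_def by simp
  ultimately show "\<forall>q\<in>V. cv q \<in> {1..k} \<and> (\<forall>u. adj E q u \<longrightarrow> ce {q, u} \<in> {1..k} \<and> cv q \<noteq> cv u) \<and>
      inj_on (star_coloring cv ce q) (star E q)"
    using total_coloringD(1,3)[OF col] adj_in_vertices[OF assms] by blast
next
  assume stars: "\<forall>q\<in>V. cv q \<in> {1..k} \<and> (\<forall>u. adj E q u \<longrightarrow> ce {q, u} \<in> {1..k} \<and> cv q \<noteq> cv u) \<and>
      inj_on (star_coloring cv ce q) (star E q)"
  have star_inj: "star_coloring cv ce q a \<noteq> star_coloring cv ce q b"
    if "adj E q a" "b \<in> star E q" "a \<noteq> b" for q a b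
  proof -
    have "q \<in> V" "a \<in> star E q" using adj_in_vertices[OF assms that(1)] that(1) unfolding star_def by auto
    then show ?thesis using stars that(2,3) unfolding inj_on_def by blast
  qed
  show "total_coloring V E k cv ce"
    unfolding total_coloring_def
  proof (intro conjI ballI impI)
    fix e assume "e \<in> E"
    moreover obtain q where "q \<in> e" using assms \<open>e \<in> E\<close> unfolding simple_graph_def by blast
    ultimately obtain a where "e = {q, a}" "adj E q a" using edge_at_vertex[OF assms] by metis
    then show "ce e \<in> {1..k}" using stars adj_in_vertices[OF assms] by blast
  next
    fix e e' assume "e \<in> E" "e' \<in> E" "e \<noteq> e' \<and> e \<inter> e' \<noteq> {}"
    then obtain q where "q \<in> e" "q \<in> e'" by blast
    then obtain a b where "e = {q, a}" "adj E q a" "e' = {q, b}" "adj E q b"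
      using edge_at_vertex[OF assms] \<open>e \<in> E\<close> \<open>e' \<in> E\<close> by metis
    with \<open>e \<noteq> e' \<and> e \<inter> e' \<noteq> {}\<close> show "ce e \<noteq> ce e'"
      using star_inj[of q a b] unfolding star_def star_coloring_def adj_def by auto
  next
    fix e q assume "e \<in> E" "q \<in> e"
    then obtain a where "e = {q, a}" "adj E q a" using edge_at_vertex[OF assms] by metis
    then show "cv q \<noteq> ce e"
      using star_inj[of q a q] unfolding star_def star_coloring_def adj_def by auto
  qed (use stars adj_in_vertices[OF assms] in auto)
qed

lemma inj_on_patch:
  assumes "inj_on f (A - B)" "inj_on g B" "g ` B \<inter> f ` (A - B) = {}"
    and "\<And>u. u \<in> A - B \<Longrightarrow> g u = f u"
  shows "inj_on g (A \<union> B)"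
proof -
  have "inj_on g (A - B)" "g ` (A - B) = f ` (A - B)"
    using assms(1,4) inj_on_cong[of "A - B" g f] by auto
  moreover have "A - B - B = A - B" "B - (A - B) = B" by blast+
  ultimately have "inj_on g ((A - B) \<union> B)"
    using assms(2,3) unfolding inj_on_Un[of g "A - B" B] by (simp add: Int_commute)
  then show ?thesis by simp
qed

lemma fresh_color:
  assumes "finite S" "card S < k"
  obtains c :: nat where "c \<in> {1..k}" "c \<notin> S"
proof -
  have "\<not> {1..k} \<subseteq> S"
  proof
    assume "{1..k} \<subseteq> S"
    then have "card {1..k} \<le> card S" by (rule card_mono[OF assms(1)])
    with assms(2) show False by simp
  qed
  then show ?thesis using that by blast
qed

section \<open>Recoloring around the configuration\<close>

text \<open>
  In the application \<open>a, b, g, d\<close> are the old colors of \<open>vy, vr, vz, vt\<close>, \<open>m\<close> is the color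
  missing at \<open>v\<close>, \<open>c1, c2, d1, d2\<close> are the old colors of \<open>zy, zp, tr, tp\<close> and \<open>w\<close> is the color
  of the second edge at \<open>x\<close>. If \<open>w \<noteq> m\<close> the old colors stay and \<open>vx\<close> gets \<open>m\<close>; otherwise \<open>m\<close>
  moves to another edge at \<open>v\<close>, after exchanging colors along the paths \<open>v y z\<close>, \<open>v r t\<close> or
  \<open>z p t\<close> where needed.
\<close>
lemma local_recoloring_choice:
  fixes a b g d m c1 c2 d1 d2 w :: nat
  assumes "distinct [a, b, g, d, m]" "c1 \<notin> {a, g}" "c2 \<notin> {g, c1}" "d1 \<notin> {b, d}" "d2 \<notin> {d, d1, c2}"
  obtains vx vy vz vt vr zy tr zp tp where
    "distinct [vx, vy, vz, vt, vr]" "{vx, vy, vz, vt, vr} \<subseteq> {a, b, g, d, m}"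
    "{vy, zy} = {a, c1}" "{vr, tr} = {b, d1}" "{zp, tp} = {c2, d2}"
    "distinct [vz, zy, zp]" "distinct [vt, tr, tp]" "vx \<noteq> w"
proof -
  note propositional = doubleton_eq_iff insert_subset empty_subsetI distinct.simps list.set insert_iff
    empty_iff simp_thms
  consider "w \<noteq> m" | "w = m" "m \<notin> {c1, c2}" | "w = m" "m \<notin> {d1, d2}"
    | "w = m" "c1 = m" "c2 \<noteq> a" | "w = m" "c1 = m" "c2 = a" "d1 = m"
    | "w = m" "c1 = m" "c2 = a" "d2 = m" "d1 = a" | "w = m" "c1 = m" "c2 = a" "d2 = m" "d1 \<noteq> a"
    | "w = m" "c2 = m" "d1 = m" "c1 = b" "d2 = a" | "w = m" "c2 = m" "d1 = m" "c1 = b" "d2 \<noteq> a"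
    | "w = m" "c2 = m" "d1 = m" "c1 \<noteq> b" "d2 = b" | "w = m" "c2 = m" "d1 = m" "c1 \<noteq> b" "d2 \<noteq> b"
    using assms(5) unfolding insert_iff empty_iff by argo
  then show ?thesis
  proof cases
    case 1
    show ?thesis using 1 assms
      by - (rule that[of m a g d b c1 d1 c2 d2]; (simp only: propositional)?; argo)
  next
    case 2
    show ?thesis using 2 assms
      by - (rule that[of g a m d b c1 d1 c2 d2]; (simp only: propositional)?; argo)
  next
    case 3
    show ?thesis using 3 assms
      by - (rule that[of d a g m b c1 d1 c2 d2]; (simp only: propositional)?; argo)
  next
    case 4
    show ?thesis using 4 assms
      by - (rule that[of a c1 g d b a d1 c2 d2]; (simp only: propositional)?; argo)
  next
    case 5
    show ?thesis using 5 assms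
      by - (rule that[of a c1 d g b a d1 d2 c2]; (simp only: propositional)?; argo)
  next
    case 6
    show ?thesis using 6 assms
      by - (rule that[of b c1 g d d1 a b d2 c2]; (simp only: propositional)?; argo)
  next
    case 7
    show ?thesis using 7 assms
      by - (rule that[of a c1 g d b a d1 d2 c2]; (simp only: propositional)?; argo)
  next
    case 8
    show ?thesis using 8 assms
      by - (rule that[of a c1 g d d1 a b c2 d2]; (simp only: propositional)?; argo)
  next
    case 9
    show ?thesis using 9 assms
      by - (rule that[of a c1 d g d1 a b d2 c2]; (simp only: propositional)?; argo)
  next
    case 10
    show ?thesis using 10 assms
      by - (rule that[of b a g d d1 c1 b d2 c2]; (simp only: propositional)?; argo)
  next
    case 11
    show ?thesis using 11 assms
      by - (rule that[of b a g d d1 c1 b c2 d2]; (simp only: propositional)?; argo)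
  qed
qed

locale reducible_configuration =
  fixes V :: "'a set" and E :: "'a set set" and v x y z t r p w :: 'a
  assumes simple: "simple_graph V E"
    and degree_v: "degree V E v = 8"
    and distinct: "distinct [v, x, y, z, t, r, p]"
    and adj_v: "adj E v x" "adj E v y" "adj E v r"
    and neighbors_x: "{u. adj E x u} = {v, w}" and w_neq_v: "w \<noteq> v"
    and neighbors_z: "{u. adj E z u} = {v, y, p}"
    and neighbors_t: "{u. adj E t u} = {v, r, p}"
begin

abbreviation "E' \<equiv> E - {{v, x}}"

definition recolored :: "'a set set" where
  "recolored = {{v, x}, {v, y}, {v, z}, {v, t}, {v, r}, {z, y}, {z, p}, {t, r}, {t, p}}"

lemma vx_recolored: "{v, x} \<in> recolored"
  unfolding recolored_def by simp

lemma vertices_neq: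
  "v \<noteq> x" "v \<noteq> y" "v \<noteq> z" "v \<noteq> t" "v \<noteq> r" "v \<noteq> p" "x \<noteq> y" "x \<noteq> z" "x \<noteq> t" "x \<noteq> r"
  "x \<noteq> p" "y \<noteq> z" "y \<noteq> t" "y \<noteq> r" "y \<noteq> p" "z \<noteq> t" "z \<noteq> r" "z \<noteq> p" "t \<noteq> r" "t \<noteq> p"
  "r \<noteq> p"
  using distinct by auto

lemmas vertices_neq_sym = vertices_neq[THEN not_sym]

lemma simple_graph_minus_vx: "simple_graph V E'"
  using simple by (rule simple_graph_mono) blast

lemma adj_configuration:
  "adj E x v" "adj E x w" "adj E z v" "adj E z y" "adj E z p" "adj E t v" "adj E t r" "adj E t p"
  using neighbors_x neighbors_z neighbors_t by (auto simp: set_eq_iff)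

lemma vertices_in_V: "v \<in> V" "y \<in> V" "z \<in> V" "t \<in> V" "r \<in> V" "p \<in> V"
  using adj_in_vertices[OF simple adj_v(2)] adj_in_vertices[OF simple adj_configuration(5)]
    adj_in_vertices[OF simple adj_configuration(6)] adj_in_vertices[OF simple adj_v(3)] by simp_all

lemma w_notin_recolored_vertices: "w \<notin> {x, z, t}"
proof -
  have "\<not> adj E z x" "\<not> adj E t x"
    using neighbors_z neighbors_t vertices_neq vertices_neq_sym by (auto simp: set_eq_iff)
  then have "\<not> adj E x z" "\<not> adj E x t" by (simp_all add: adj_commute[of E x])
  then show ?thesis using adj_configuration(2) not_adj_self[of E x] by auto
qed

lemma recolored_vertices_not_adj: "q \<in> {x, z, t} \<Longrightarrow> adj E q u \<Longrightarrow> u \<notin> {x, z, t}"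
  using neighbors_x neighbors_z neighbors_t w_notin_recolored_vertices vertices_neq vertices_neq_sym
  by (auto simp: set_eq_iff)

lemma recolored_at:
  "{v, u} \<in> recolored \<Longrightarrow> u \<in> {x, y, z, t, r}" "{y, u} \<in> recolored \<Longrightarrow> u \<in> {v, z}"
  "{r, u} \<in> recolored \<Longrightarrow> u \<in> {v, t}" "{p, u} \<in> recolored \<Longrightarrow> u \<in> {z, t}"
  "q \<notin> {v, x, y, z, t, r, p} \<Longrightarrow> {q, u} \<notin> recolored"
  unfolding recolored_def using vertices_neq vertices_neq_sym by (auto simp: doubleton_eq_iff)

lemma adj_delete_configuration:
  "adj E' y v" "adj E' y z" "adj E' r v" "adj E' r t" "adj E' p z" "adj E' p t"
  "adj E' z v" "adj E' z y" "adj E' z p" "adj E' t v" "adj E' t r" "adj E' t p"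
  using adj_configuration adj_sym[OF adj_v(2)] adj_sym[OF adj_configuration(4)] adj_sym[OF adj_v(3)]
    adj_sym[OF adj_configuration(7)] adj_sym[OF adj_configuration(5)] adj_sym[OF adj_configuration(8)]
    vertices_neq vertices_neq_sym
  unfolding adj_delete_edge_iff by (simp_all add: doubleton_eq_iff)

end

locale colored_configuration = reducible_configuration +
  fixes cv :: "'a \<Rightarrow> nat" and ce :: "'a set \<Rightarrow> nat"
  assumes coloring: "total_coloring V E' 9 cv ce"
begin

lemma old_coloring_at:
  assumes "q \<in> V"
  shows "cv q \<in> {1..9}" "adj E' q u \<Longrightarrow> ce {q, u} \<in> {1..9}" "adj E' q u \<Longrightarrow> cv q \<noteq> cv u"
    and "inj_on (star_coloring cv ce q) (star E' q)"
  using coloring assms unfolding total_coloring_iff_stars[OF simple_graph_minus_vx] by blast+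

end

locale edge_recoloring = colored_configuration +
  fixes ce' :: "'a set \<Rightarrow> nat"
  assumes edges_unchanged: "e \<notin> recolored \<Longrightarrow> ce' e = ce e"
    and recolored_edge_range: "e \<in> recolored \<Longrightarrow> ce' e \<in> {1..9}"
    and inj_at_v: "inj_on (\<lambda>u. ce' {v, u}) {x, y, z, t, r}"
    and fresh_at_v:
      "(\<lambda>u. ce' {v, u}) ` {x, y, z, t, r} \<inter> star_coloring cv ce v ` (star E' v - {x, y, z, t, r}) = {}"
    and permuted_at_y: "(\<lambda>u. ce' {y, u}) ` {v, z} = (\<lambda>u. ce {y, u}) ` {v, z}"
    and permuted_at_r: "(\<lambda>u. ce' {r, u}) ` {v, t} = (\<lambda>u. ce {r, u}) ` {v, t}"
    and permuted_at_p: "(\<lambda>u. ce' {p, u}) ` {z, t} = (\<lambda>u. ce {p, u}) ` {z, t}"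
    and inj_at_xzt: "q \<in> {x, z, t} \<Longrightarrow> inj_on (\<lambda>u. ce' {q, u}) {u. adj E q u}"

locale recoloring = edge_recoloring +
  fixes cv' :: "'a \<Rightarrow> nat"
  assumes vertices_unchanged: "q \<notin> {x, z, t} \<Longrightarrow> cv' q = cv q"
    and recolored_vertex_range: "q \<in> {x, z, t} \<Longrightarrow> cv' q \<in> {1..9}"
    and recolored_vertex_fresh: "q \<in> {x, z, t} \<Longrightarrow> adj E q u \<Longrightarrow> cv' q \<noteq> cv u \<and> cv' q \<noteq> ce' {q, u}"
begin

lemma inj_on_star_patch:
  assumes "q \<in> V" "q \<notin> {x, z, t}" "B \<subseteq> {u. adj E q u}" "\<And>u. {q, u} \<in> recolored \<Longrightarrow> u \<in> B"
    and "inj_on (\<lambda>u. ce' {q, u}) B"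
    and "(\<lambda>u. ce' {q, u}) ` B \<inter> star_coloring cv ce q ` (star E' q - B) = {}"
  shows "inj_on (star_coloring cv' ce' q) (star E q)"
proof -
  have "q \<notin> B" using assms(3) not_adj_self[of E q] by blast
  then have on_B: "star_coloring cv' ce' q u = ce' {q, u}" if "u \<in> B" for u
    using that unfolding star_coloring_def by auto
  have "star E q \<subseteq> star E' q \<union> B"
    using assms(4) vx_recolored unfolding star_def adj_delete_edge_iff by auto
  moreover have "inj_on (star_coloring cv' ce' q) (star E' q \<union> B)"
  proof (rule inj_on_patch)
    show "inj_on (star_coloring cv ce q) (star E' q - B)"
      using old_coloring_at(4)[OF assms(1)] by (rule inj_on_subset) blast
    show "inj_on (star_coloring cv' ce' q) B"
      using assms(5) inj_on_cong[of B "star_coloring cv' ce' q" "\<lambda>u. ce' {q, u}"] on_B by simp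
    have "star_coloring cv' ce' q ` B = (\<lambda>u. ce' {q, u}) ` B" by (rule image_cong) (simp_all add: on_B)
    with assms(6) show "star_coloring cv' ce' q ` B \<inter> star_coloring cv ce q ` (star E' q - B) = {}"
      by simp
    show "star_coloring cv' ce' q u = star_coloring cv ce q u" if "u \<in> star E' q - B" for u
    proof -
      have "{q, u} \<notin> recolored" using that assms(4) by blast
      from edges_unchanged[OF this] vertices_unchanged[OF assms(2)] show ?thesis
        unfolding star_coloring_def by simp
    qed
  qed
  ultimately show ?thesis by (rule inj_on_subset[rotated])
qed

lemma inj_on_star_permuted:
  assumes "q \<in> V" "q \<notin> {x, z, t}" "B \<subseteq> {u. adj E' q u}" "finite B"
    and "\<And>u. {q, u} \<in> recolored \<Longrightarrow> u \<in> B"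
    and "(\<lambda>u. ce' {q, u}) ` B = (\<lambda>u. ce {q, u}) ` B"
  shows "inj_on (star_coloring cv' ce' q) (star E q)"
proof (rule inj_on_star_patch[OF assms(1,2) _ assms(5)])
  let ?f = "star_coloring cv ce q"
  have inj: "inj_on ?f (star E' q)" by (rule old_coloring_at(4)[OF assms(1)])
  have B_sub: "B \<subseteq> star E' q" using assms(3) unfolding star_def by auto
  have "q \<notin> B" using assms(3) not_adj_self[of E' q] by blast
  then have "?f ` B = (\<lambda>u. ce {q, u}) ` B" unfolding star_coloring_def by (auto intro: image_cong)
  with assms(6) have f_B: "?f ` B = (\<lambda>u. ce' {q, u}) ` B" by simp
  show "B \<subseteq> {u. adj E q u}" using assms(3) unfolding adj_delete_edge_iff by auto
  have "card ((\<lambda>u. ce' {q, u}) ` B) = card B"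
    using f_B card_image[OF inj_on_subset[OF inj B_sub]] by simp
  then show "inj_on (\<lambda>u. ce' {q, u}) B" using assms(4) by (simp add: inj_on_iff_eq_card)
  have "?f ` B \<inter> ?f ` (star E' q - B) = {}"
    using inj_on_image_Int[OF inj B_sub Diff_subset[of "star E' q" B]] by auto
  with f_B show "(\<lambda>u. ce' {q, u}) ` B \<inter> ?f ` (star E' q - B) = {}" by simp
qed

lemma new_edge_colors_in_range:
  assumes "adj E q u"
  shows "ce' {q, u} \<in> {1..9}"
proof (cases "{q, u} \<in> recolored")
  case True
  then show ?thesis by (rule recolored_edge_range)
next
  case False
  then have "adj E' q u" using assms vx_recolored unfolding adj_delete_edge_iff by auto
  then show ?thesis
    using edges_unchanged[OF False] old_coloring_at(2) adj_in_vertices(1)[OF simple assms] by simp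
qed

lemma new_vertex_colors_differ:
  assumes "adj E q u"
  shows "cv' q \<noteq> cv' u"
proof -
  consider "q \<in> {x, z, t}" | "u \<in> {x, z, t}" | "q \<notin> {x, z, t}" "u \<notin> {x, z, t}" by blast
  then show ?thesis
  proof cases
    case 1
    then show ?thesis using recolored_vertex_fresh[OF 1 assms] vertices_unchanged
        recolored_vertices_not_adj[OF 1 assms] by simp
  next
    case 2
    have "adj E u q" using assms by (rule adj_sym)
    then show ?thesis using recolored_vertex_fresh[OF 2] vertices_unchanged
        recolored_vertices_not_adj[OF 2] by fastforce
  next
    case 3
    then have "adj E' q u" using assms unfolding adj_delete_edge_iff by (auto simp: doubleton_eq_iff)
    then show ?thesis using 3 vertices_unchanged old_coloring_at(3) adj_in_vertices(1)[OF simple assms] by simp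
  qed
qed

lemma inj_on_new_star:
  assumes "q \<in> V"
  shows "inj_on (star_coloring cv' ce' q) (star E q)"
proof -
  consider "q \<in> {x, z, t}" | "q = v" | "q = y" | "q = r" | "q = p" | "q \<notin> {v, x, y, z, t, r, p}"
    by blast
  then show ?thesis
  proof cases
    case 1
    have on_N: "star_coloring cv' ce' q u = ce' {q, u}" if "adj E q u" for u
      using that not_adj_self[of E q] unfolding star_coloring_def by auto
    then have "inj_on (star_coloring cv' ce' q) {u. adj E q u}"
      using inj_at_xzt[OF 1] inj_on_cong[of "{u. adj E q u}" "star_coloring cv' ce' q"] by simp
    moreover have "star_coloring cv' ce' q q \<notin> star_coloring cv' ce' q ` {u. adj E q u}"
      using recolored_vertex_fresh[OF 1] on_N unfolding star_coloring_def by auto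
    ultimately show ?thesis unfolding star_def by (simp; blast)
  next
    case 2
    have "{x, y, z, t, r} \<subseteq> {u. adj E v u}"
      using adj_v adj_sym[OF adj_configuration(3)] adj_sym[OF adj_configuration(6)] by simp
    with 2 show ?thesis
      using inj_on_star_patch[OF vertices_in_V(1) _ _ recolored_at(1) inj_at_v fresh_at_v] vertices_neq by simp
  next
    case 3
    then show ?thesis
      using inj_on_star_permuted[OF vertices_in_V(2) _ _ _ recolored_at(2) permuted_at_y]
        adj_delete_configuration vertices_neq_sym by simp
  next
    case 4
    then show ?thesis
      using inj_on_star_permuted[OF vertices_in_V(5) _ _ _ recolored_at(3) permuted_at_r]
        adj_delete_configuration vertices_neq_sym by simp
  next
    case 5
    then show ?thesis
      using inj_on_star_permuted[OF vertices_in_V(6) _ _ _ recolored_at(4) permuted_at_p]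
        adj_delete_configuration vertices_neq_sym by simp
  next
    case 6
    then show ?thesis
      using inj_on_star_permuted[OF assms, of "{}"] recolored_at(5) by simp
  qed
qed

theorem total_coloring_recolored: "total_coloring V E 9 cv' ce'"
  unfolding total_coloring_iff_stars[OF simple]
  using old_coloring_at(1) vertices_unchanged recolored_vertex_range new_edge_colors_in_range
    new_vertex_colors_differ inj_on_new_star
  by metis

end

context colored_configuration
begin

lemma missing_color_at_v:
  obtains m where "m \<in> {1..9}" "m \<notin> star_coloring cv ce v ` star E' v"
proof (rule fresh_color)
  have "card {u. adj E v u} = 8" using degree_v degree_eq_card_neighbors[OF simple] by simp
  then have fin: "finite {u. adj E v u}" by (simp add: card_ge_0_finite)
  have "star E' v = insert v ({u. adj E v u} - {x})"
    using vertices_neq(1) unfolding star_def adj_delete_edge_iff by (auto simp: doubleton_eq_iff)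
  then have "card (star E' v) \<le> 8"
    using fin adj_v(1) \<open>card {u. adj E v u} = 8\<close> by (simp add: card_insert_if)
  then show "card (star_coloring cv ce v ` star E' v) < 9"
    using card_image_le[of "star E' v" "star_coloring cv ce v"] fin
    unfolding \<open>star E' v = _\<close> by simp
  show "finite (star_coloring cv ce v ` star E' v)" using fin unfolding \<open>star E' v = _\<close> by simp
qed

lemma old_colors_distinct:
  assumes "m \<notin> star_coloring cv ce v ` star E' v"
  shows "distinct [ce {v, y}, ce {v, r}, ce {v, z}, ce {v, t}, m]"
    and "ce {z, y} \<notin> {ce {v, y}, ce {v, z}}" "ce {z, p} \<notin> {ce {v, z}, ce {z, y}}"
    and "ce {t, r} \<notin> {ce {v, r}, ce {v, t}}" "ce {t, p} \<notin> {ce {v, t}, ce {t, r}, ce {z, p}}"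
proof -
  let ?f = "star_coloring cv ce v"
  have "set [y, r, z, t] \<subseteq> star E' v"
    using adj_delete_configuration(1,3,7,10)[THEN adj_sym] unfolding star_def by simp
  then have "distinct (map ?f [y, r, z, t])"
    using vertices_neq inj_on_subset[OF old_coloring_at(4)[OF vertices_in_V(1)] \<open>set [y, r, z, t] \<subseteq> _\<close>]
    by (simp add: distinct_map)
  moreover have "m \<notin> ?f ` set [y, r, z, t]" using assms \<open>set [y, r, z, t] \<subseteq> _\<close> by blast
  ultimately show "distinct [ce {v, y}, ce {v, r}, ce {v, z}, ce {v, t}, m]"
    using vertices_neq unfolding star_coloring_def by auto
  note differ = total_coloring_edges_at_vertex[OF coloring]
  have "ce {y, z} \<noteq> ce {y, v}" "ce {z, y} \<noteq> ce {z, v}" "ce {z, p} \<noteq> ce {z, v}"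
    "ce {z, p} \<noteq> ce {z, y}" "ce {r, t} \<noteq> ce {r, v}" "ce {t, r} \<noteq> ce {t, v}"
    "ce {t, p} \<noteq> ce {t, v}" "ce {t, p} \<noteq> ce {t, r}" "ce {p, t} \<noteq> ce {p, z}"
    using differ adj_delete_configuration vertices_neq vertices_neq_sym by blast+
  then show "ce {z, y} \<notin> {ce {v, y}, ce {v, z}}" "ce {z, p} \<notin> {ce {v, z}, ce {z, y}}"
    "ce {t, r} \<notin> {ce {v, r}, ce {v, t}}" "ce {t, p} \<notin> {ce {v, t}, ce {t, r}, ce {z, p}}"
    by (simp_all add: insert_commute)
qed

lemma old_colors_in_range:
  "{ce {v, y}, ce {v, r}, ce {v, z}, ce {v, t}, ce {z, y}, ce {z, p}, ce {t, r}, ce {t, p}} \<subseteq> {1..9}"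
  using old_coloring_at(2)[OF vertices_in_V(1)] old_coloring_at(2)[OF vertices_in_V(3)]
    old_coloring_at(2)[OF vertices_in_V(4)] adj_delete_configuration(8,9,11,12)
    adj_delete_configuration(1,3,7,10)[THEN adj_sym] by simp

lemma old_colors_at_v_outside:
  assumes "m \<notin> star_coloring cv ce v ` star E' v" "u \<in> star E' v - {x, y, z, t, r}"
  shows "star_coloring cv ce v u \<notin> {ce {v, y}, ce {v, r}, ce {v, z}, ce {v, t}, m}"
proof -
  have "{y, r, z, t} \<subseteq> star E' v"
    using adj_delete_configuration(1,3,7,10)[THEN adj_sym] unfolding star_def by simp
  then have "star_coloring cv ce v u \<notin> star_coloring cv ce v ` {y, r, z, t}"
    using assms(2) inj_on_image_mem_iff[OF old_coloring_at(4)[OF vertices_in_V(1)]] by blast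
  then show ?thesis using assms vertices_neq unfolding star_coloring_def by auto
qed

lemma edge_recoloring_update:
  assumes m: "m \<in> {1..9}" "m \<notin> star_coloring cv ce v ` star E' v"
    and new: "distinct [vx, vy, vz, vt, vr]" "{vx, vy, vz, vt, vr} \<subseteq> {ce {v, y}, ce {v, r}, ce {v, z}, ce {v, t}, m}"
      "{vy, zy} = {ce {v, y}, ce {z, y}}" "{vr, tr} = {ce {v, r}, ce {t, r}}" "{zp, tp} = {ce {z, p}, ce {t, p}}"
      "distinct [vz, zy, zp]" "distinct [vt, tr, tp]" "vx \<noteq> ce {x, w}"
  defines "ce' \<equiv> ce({v, x} := vx, {v, y} := vy, {v, z} := vz, {v, t} := vt, {v, r} := vr,
    {z, y} := zy, {t, r} := tr, {z, p} := zp, {t, p} := tp)"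
  shows "edge_recoloring V E v x y z t r p w cv ce ce'"
proof unfold_locales
  have vals: "ce' {v, x} = vx" "ce' {x, v} = vx" "ce' {v, y} = vy" "ce' {y, v} = vy"
    "ce' {v, z} = vz" "ce' {z, v} = vz" "ce' {v, t} = vt" "ce' {t, v} = vt" "ce' {v, r} = vr"
    "ce' {r, v} = vr" "ce' {z, y} = zy" "ce' {y, z} = zy" "ce' {t, r} = tr" "ce' {r, t} = tr"
    "ce' {z, p} = zp" "ce' {p, z} = zp" "ce' {t, p} = tp" "ce' {p, t} = tp" "ce' {x, w} = ce {x, w}"
    unfolding ce'_def using vertices_neq vertices_neq_sym w_neq_v by (simp_all add: doubleton_eq_iff)
  show "ce' e = ce e" if "e \<notin> recolored" for e
    using that unfolding ce'_def recolored_def by simp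
  have "{vx, vy, vz, vt, vr} \<subseteq> {1..9}"
    using new(2) by (rule order_trans) (use old_colors_in_range m(1) in simp)
  moreover have "zy \<in> {ce {v, y}, ce {z, y}}" "tr \<in> {ce {v, r}, ce {t, r}}"
    "zp \<in> {ce {z, p}, ce {t, p}}" "tp \<in> {ce {z, p}, ce {t, p}}"
    using new(3-5) by blast+
  then have "{zy, tr, zp, tp} \<subseteq> {1..9}" using old_colors_in_range by auto
  ultimately have "{vx, vy, vz, vt, vr, zy, tr, zp, tp} \<subseteq> {1..9}" by simp
  then show "ce' e \<in> {1..9}" if "e \<in> recolored" for e
    using that vals unfolding recolored_def by auto
  show "inj_on (\<lambda>u. ce' {v, u}) {x, y, z, t, r}"
    using new(1) vertices_neq vertices_neq_sym by (simp add: vals)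
  let ?f = "star_coloring cv ce v"
  define S where "S = {ce {v, y}, ce {v, r}, ce {v, z}, ce {v, t}, m}"
  have new_S: "(\<lambda>u. ce' {v, u}) ` {x, y, z, t, r} \<subseteq> S" using new(2) unfolding S_def by (simp add: vals)
  have old_not_S: "?f u \<notin> S" if "u \<in> star E' v - {x, y, z, t, r}" for u
    using old_colors_at_v_outside[OF m(2) that] unfolding S_def .
  show "(\<lambda>u. ce' {v, u}) ` {x, y, z, t, r} \<inter> ?f ` (star E' v - {x, y, z, t, r}) = {}"
  proof (rule Int_emptyI)
    fix c assume c_new: "c \<in> (\<lambda>u. ce' {v, u}) ` {x, y, z, t, r}"
      and c_old: "c \<in> ?f ` (star E' v - {x, y, z, t, r})"
    from c_old obtain u where "u \<in> star E' v - {x, y, z, t, r}" "c = ?f u" by (rule imageE)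
    with subsetD[OF new_S c_new] old_not_S show False by simp
  qed
  show "(\<lambda>u. ce' {y, u}) ` {v, z} = (\<lambda>u. ce {y, u}) ` {v, z}"
    using new(3) by (simp add: vals insert_commute)
  show "(\<lambda>u. ce' {r, u}) ` {v, t} = (\<lambda>u. ce {r, u}) ` {v, t}"
    using new(4) by (simp add: vals insert_commute)
  show "(\<lambda>u. ce' {p, u}) ` {z, t} = (\<lambda>u. ce {p, u}) ` {z, t}"
    using new(5) by (simp add: vals insert_commute)
  show "inj_on (\<lambda>u. ce' {q, u}) {u. adj E q u}" if q: "q \<in> {x, z, t}" for q
  proof -
    consider "q = x" | "q = z" | "q = t" using q by blast
    then show ?thesis
    proof cases
      case 1
      then show ?thesis using neighbors_x w_neq_v new(8) by (simp add: vals)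
    next
      case 2
      then show ?thesis using neighbors_z new(6) vertices_neq_sym by (simp add: vals)
    next
      case 3
      then show ?thesis using neighbors_t new(7) vertices_neq vertices_neq_sym by (simp add: vals)
    qed
  qed
qed

lemma edge_recoloring_exists: "\<exists>ce'. edge_recoloring V E v x y z t r p w cv ce ce'"
proof -
  obtain m where m: "m \<in> {1..9}" "m \<notin> star_coloring cv ce v ` star E' v"
    by (rule missing_color_at_v)
  show ?thesis
    by (rule local_recoloring_choice[OF old_colors_distinct[OF m(2)], of "ce {x, w}"])
      (blast intro: edge_recoloring_update[OF m])
qed

end

context edge_recoloring
begin

lemma recoloring_exists: "\<exists>cv'. recoloring V E v x y z t r p w cv ce ce' cv'"
proof -
  have "\<exists>c. c \<in> {1..9} \<and> c \<notin> cv ` {u. adj E q u} \<union> (\<lambda>u. ce' {q, u}) ` {u. adj E q u}"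
    if "q \<in> {x, z, t}" for q
  proof -
    have "finite {u. adj E q u}" "card {u. adj E q u} \<le> 3"
      using that neighbors_x neighbors_z neighbors_t card_length[of "[v, w]"]
        card_length[of "[v, y, p]"] card_length[of "[v, r, p]"] by auto
    let ?N = "{u. adj E q u}"
    have "card (cv ` ?N \<union> (\<lambda>u. ce' {q, u}) ` ?N) \<le> card (cv ` ?N) + card ((\<lambda>u. ce' {q, u}) ` ?N)"
      by (rule card_Un_le)
    also have "\<dots> \<le> card ?N + card ?N" by (intro add_mono card_image_le) fact+
    finally have "card (cv ` ?N \<union> (\<lambda>u. ce' {q, u}) ` ?N) < 9" using \<open>card ?N \<le> 3\<close> by linarith
    then show ?thesis using \<open>finite ?N\<close> by (metis fresh_color finite_UnI finite_imageI)
  qed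
  then obtain col where col: "\<And>q. q \<in> {x, z, t} \<Longrightarrow>
      col q \<in> {1..9} \<and> col q \<notin> cv ` {u. adj E q u} \<union> (\<lambda>u. ce' {q, u}) ` {u. adj E q u}"
    by metis
  define cv' where "cv' q = (if q \<in> {x, z, t} then col q else cv q)" for q
  have "recoloring V E v x y z t r p w cv ce ce' cv'"
    by unfold_locales (use col in \<open>auto simp: cv'_def\<close>)
  then show ?thesis by blast
qed

end

context colored_configuration
begin

theorem total_colorable: "total_colorable V E 9"
proof -
  obtain ce' where "edge_recoloring V E v x y z t r p w cv ce ce'"
    using edge_recoloring_exists by blast
  then interpret edge_recoloring V E v x y z t r p w cv ce ce' .
  obtain cv' where "recoloring V E v x y z t r p w cv ce ce' cv'"
    using recoloring_exists by blast
  then interpret recoloring V E v x y z t r p w cv ce ce' cv' .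
  show ?thesis unfolding total_colorable_def using total_coloring_recolored by blast
qed

end

lemma reducible_configurationI:
  assumes simple: "simple_graph V E" and "degree V E v = 8" "distinct [x, y, z, t, r]"
    and adj_v: "adj E v x" "adj E v y" "adj E v z" "adj E v t" "adj E v r"
    and "p \<notin> {v, x, y, z, t, r}"
    and "degree V E x = 2" "degree V E z = 3" "degree V E t = 3"
    and "adj E y z" "adj E t r" "adj E p z" "adj E p t"
  obtains w where "reducible_configuration V E v x y z t r p w"
proof -
  have distinct: "distinct [v, x, y, z, t, r, p]"
    using assms(3,9) adj_v unfolding adj_def by auto
  obtain w where "{u. adj E x u} = {v, w}" "w \<noteq> v"
    using neighbors_degree_two[OF simple \<open>degree V E x = 2\<close> adj_sym[OF adj_v(1)]] by blast
  moreover have "{u. adj E z u} = {v, y, p}"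
    using distinct adj_sym[OF adj_v(3)] adj_sym[OF assms(13)] adj_sym[OF assms(15)] assms(11)
    by (intro neighbors_eq_if_card[OF simple]) auto
  moreover have "{u. adj E t u} = {v, r, p}"
    using distinct adj_sym[OF adj_v(4)] assms(14) adj_sym[OF assms(16)] assms(12)
    by (intro neighbors_eq_if_card[OF simple]) auto
  ultimately have "reducible_configuration V E v x y z t r p w"
    using assms(1,2) distinct adj_v by unfold_locales
  then show ?thesis by (rule that)
qed

theorem lemma2p13:
  fixes V :: "'a set" and E :: "'a set set"
  assumes "minimal_counterexample V E"
  shows "\<not> (\<exists>v x y z t r p.
            v \<in> V \<and> degree V E v = 8 \<and>
            distinct [x, y, z, t, r] \<and>
            adj E v x \<and> adj E v y \<and> adj E v z \<and> adj E v t \<and> adj E v r \<and>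
            p \<in> V \<and> p \<notin> {v, x, y, z, t, r} \<and>
            degree V E x = 2 \<and> degree V E z = 3 \<and> degree V E t = 3 \<and>
            adj E y z \<and> adj E t r \<and> adj E p z \<and> adj E p t)"
proof (rule notI, elim exE conjE, goal_cases)
  case (1 v x y z t r p)
  have simple: "simple_graph V E" and not_colorable: "\<not> total_colorable V E 9"
    using assms unfolding minimal_counterexample_def by argo+
  obtain w where "reducible_configuration V E v x y z t r p w"
    using reducible_configurationI[OF simple 1(2-8,10-17)] by blast
  then interpret reducible_configuration V E v x y z t r p w .
  obtain cv ce where "total_coloring V E' 9 cv ce"
    using minimal_counterexample_delete_edge[OF assms] 1(4) unfolding adj_def total_colorable_def by blast
  then interpret colored_configuration V E v x y z t r p w cv ce by unfold_locales
  show False using total_colorable not_colorable by blast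
qed

end
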